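(* For $i=1,2$ let $\lambda_i\in\mathbb{C}^*$, $\alpha_i\in\mathbb{C}\setminus\{0\}$, and $h_i=\xi_it+\eta_i\in\mathbb{C}[t]$ with $\xi_i\ne0$. Then $\Omega(\lambda_1,\alpha_1,h_1)\cong\Omega(\lambda_2,\alpha_2,h_2)$ as $\mathrm{Vir}$-modules if and only if $\lambda_1=\lambda_2$ and $\alpha_1\xi_1=\alpha_2\xi_2$; and in that case the isomorphisms are exactly the nonzero scalar multiples of the linear map $\phi$ with $\phi(s^ih_1^n)=s^ig_n(h_2)$ for all $n,i\in\mathbb{Z}_+$, where $g_n(x)=\sum_{i=0}^n\binom{n}{i}b_{n-i}x^i$ and $b_0=1$, $b_1=0$, $b_{i+1}=ib_i+i(\eta_2-\eta_1)b_{i-1}$ for $i\in\mathbb{N}$.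
   Context: $\mathrm{Vir}$ is the Lie algebra with basis $\{d_i,c\mid i\in\mathbb{Z}\}$ and brackets $[d_i,d_j]=(j-i)d_{i+j}+\delta_{i,-j}\frac{i^3-i}{12}c$, $[c,d_i]=0$. For $\lambda\in\mathbb{C}^*$, $\alpha\in\mathbb{C}$, $h\in\mathbb{C}[t]$, define operators on $\mathbb{C}[t]$ by $F(f)=\frac{h(t)-h(\alpha)}{t-\alpha}f(t)-f'(t)$ and $G(f)=h(\alpha)f+tF(f)$. The $\mathrm{Vir}$-module $\Omega(\lambda,\alpha,h)$ is the vector space $\mathbb{C}[t,s]$ with $c$ acting as $0$ and $d_m(f(t)s^i)=\lambda^m(s-m)^i\big(sf+mG(f)-m^2\alpha F(f)\big)$ for $m\in\mathbb{Z}$, $i\in\mathbb{Z}_+$, $f\in\mathbb{C}[t]$. *)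

theory Defs
  imports "HOL-Computational_Algebra.Polynomial"
begin

text \<open>The space C[t,s] is represented as complex poly poly: polynomials in s
  whose coefficients are polynomials in t. So f(t) s^i is  monom f i.\<close>

type_synonym cts = "complex poly poly"

definition Fop :: "complex \<Rightarrow> complex poly \<Rightarrow> complex poly \<Rightarrow> complex poly" where
  "Fop \<alpha> h f = ((h - [:poly h \<alpha>:]) div pCons (- \<alpha>) 1) * f - pderiv f"

definition Gop :: "complex \<Rightarrow> complex poly \<Rightarrow> complex poly \<Rightarrow> complex poly" where
  "Gop \<alpha> h f = smult (poly h \<alpha>) f + [:0, 1:] * Fop \<alpha> h f"

text \<open>Action of d_m on Omega(lambda, alpha, h), extended linearly from
  d_m(f(t) s^i) = lambda^m (s-m)^i (s f + m G(f) - m^2 alpha F(f)).\<close>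
definition omega_d :: "complex \<Rightarrow> complex \<Rightarrow> complex poly \<Rightarrow> int \<Rightarrow> cts \<Rightarrow> cts" where
  "omega_d l \<alpha> h m P =
     (\<Sum>i\<le>degree P. smult [:l powi m:]
        ((pCons (- of_int m) 1) ^ i *
         pCons (smult (of_int m) (Gop \<alpha> h (coeff P i))
            - smult ((of_int m) ^ 2 * \<alpha>) (Fop \<alpha> h (coeff P i))) (pCons (coeff P i) 0)))"

datatype vir_basis = Dvir int | Cvir

fun omega_act :: "complex \<Rightarrow> complex \<Rightarrow> complex poly \<Rightarrow> vir_basis \<Rightarrow> cts \<Rightarrow> cts" where
  "omega_act l \<alpha> h (Dvir m) P = omega_d l \<alpha> h m P"
| "omega_act l \<alpha> h Cvir P = 0"

definition cscale :: "complex \<Rightarrow> cts \<Rightarrow> cts" where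
  "cscale a P = smult [:a:] P"

definition clinear :: "(cts \<Rightarrow> cts) \<Rightarrow> bool" where
  "clinear \<phi> \<longleftrightarrow> (\<forall>P Q. \<phi> (P + Q) = \<phi> P + \<phi> Q) \<and> (\<forall>a P. \<phi> (cscale a P) = cscale a (\<phi> P))"

definition omega_iso :: "complex \<Rightarrow> complex \<Rightarrow> complex poly \<Rightarrow> complex \<Rightarrow> complex \<Rightarrow> complex poly
                          \<Rightarrow> (cts \<Rightarrow> cts) \<Rightarrow> bool" where
  "omega_iso l1 \<alpha>1 h1 l2 \<alpha>2 h2 \<phi> \<longleftrightarrow> clinear \<phi> \<and> bij \<phi> \<and>
     (\<forall>x P. \<phi> (omega_act l1 \<alpha>1 h1 x P) = omega_act l2 \<alpha>2 h2 x (\<phi> P))"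

definition omega_isomorphic :: "complex \<Rightarrow> complex \<Rightarrow> complex poly \<Rightarrow> complex \<Rightarrow> complex \<Rightarrow> complex poly \<Rightarrow> bool" where
  "omega_isomorphic l1 \<alpha>1 h1 l2 \<alpha>2 h2 \<longleftrightarrow> (\<exists>\<phi>. omega_iso l1 \<alpha>1 h1 l2 \<alpha>2 h2 \<phi>)"

fun bseq :: "complex \<Rightarrow> nat \<Rightarrow> complex" where
  "bseq \<delta> 0 = 1"
| "bseq \<delta> (Suc 0) = 0"
| "bseq \<delta> (Suc (Suc k)) = of_nat (Suc k) * bseq \<delta> (Suc k) + of_nat (Suc k) * \<delta> * bseq \<delta> k"

definition gpoly :: "complex \<Rightarrow> nat \<Rightarrow> complex poly \<Rightarrow> complex poly" where
  "gpoly \<delta> n x = (\<Sum>i\<le>n. smult (of_nat (n choose i) * bseq \<delta> (n - i)) (x ^ i))"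

end

theory Submission
  imports Defs
begin

text \<open>Write \<open>h\<^sub>i = \<eta>\<^sub>i + \<xi>\<^sub>i t\<close>. In the coordinate \<open>x = h\<^sub>i(t)\<close> the operators become
  \<open>F = \<xi>\<^sub>i (1 - \<partial>\<^sub>x)\<close> and \<open>G = (\<eta>\<^sub>i + \<alpha>\<^sub>i\<xi>\<^sub>i) + (x - \<eta>\<^sub>i)(1 - \<partial>\<^sub>x)\<close>. The linear map
  \<open>x\<^sup>n \<mapsto> g\<^sub>n(x)\<close> commutes with \<open>\<partial>\<^sub>x\<close> (as \<open>g\<^sub>n' = n g\<^sub>n\<^sub>-\<^sub>1\<close>) and, by the recursion of \<open>b\<close>,
  carries the \<open>G\<close> of the first module to the \<open>G\<close> of the second once \<open>\<alpha>\<^sub>1\<xi>\<^sub>1 = \<alpha>\<^sub>2\<xi>\<^sub>2\<close>;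
  applied coefficientwise in \<open>s\<close> it is the isomorphism \<open>\<phi>\<close>.

  Conversely, a homomorphism \<open>\<psi>\<close> commutes with \<open>s\<close> (the action of \<open>d\<^sub>0\<close>) and is determined
  by \<open>\<psi>(1)\<close>, because \<open>d\<^sub>1 - d\<^sub>-\<^sub>1\<close> acts on \<open>\<complex>[t]\<close> as \<open>2G\<close>, which raises the degree in \<open>t\<close>.
  Comparing \<open>\<psi>(d\<^sub>m 1)\<close> with \<open>d\<^sub>m \<psi>(1)\<close> for all \<open>m\<close>: a geometric factor \<open>(\<lambda>\<^sub>2/\<lambda>\<^sub>1)\<^sup>m\<close>
  cannot be balanced by polynomials in \<open>m\<close> unless \<open>\<lambda>\<^sub>1 = \<lambda>\<^sub>2\<close>; then leading coefficients
  force \<open>\<psi>(1)\<close> to be a nonzero constant \<open>a\<close> and \<open>\<alpha>\<^sub>1\<xi>\<^sub>1 = \<alpha>\<^sub>2\<xi>\<^sub>2\<close>, and \<open>\<psi> - a\<phi>\<close> kills \<open>1\<close>,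
  hence vanishes.\<close>

lemma poly_eq_0_if_roots_from:
  fixes p :: "'a::{idom, ring_char_0} poly"
  assumes "\<And>k. k \<ge> n \<Longrightarrow> poly p (of_nat k) = 0"
  shows "p = 0"
proof (rule ccontr)
  assume "p \<noteq> 0"
  then have "finite {x. poly p x = 0}" by (rule poly_roots_finite)
  moreover have "of_nat ` {n..} \<subseteq> {x. poly p x = (0::'a)}" using assms by auto
  ultimately have "finite (of_nat ` {n..} :: 'a set)" by (rule finite_subset[rotated])
  then have "finite {n..}" by (rule finite_imageD) (simp add: inj_on_def)
  then show False using infinite_Ici by blast
qed

lemma degree_pcompose_shift_diff_less:
  fixes q :: "'a::{idom, ring_char_0} poly"
  assumes "degree q > 0"
  shows "degree (pcompose q [:1, 1:] - q) < degree q"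
proof -
  let ?d = "pcompose q [:1, 1:] - q"
  have "degree ?d \<le> degree q"
    by (rule degree_diff_le) (simp_all add: degree_pcompose)
  moreover have "coeff ?d (degree q) = 0"
    using lead_coeff_comp[of "[:1, 1:]" q] by (simp add: degree_pcompose)
  ultimately show ?thesis
    using assms by (metis leading_coeff_0_iff le_neq_implies_less degree_0)
qed

text \<open>Apply \<open>p \<mapsto> r p(\<cdot> + 1) - p\<close>, which turns the right-hand side into its forward
  difference, until the right-hand side vanishes.\<close>

lemma power_mult_poly_eq_poly_imp_zero:
  fixes r :: "'a::{idom, ring_char_0}" and p q :: "'a poly"
  assumes "r \<noteq> 0" "r \<noteq> 1" "\<And>m. r ^ m * poly p (of_nat m) = poly q (of_nat m)"
  shows "p = 0"
  using assms(3)
proof (induction "degree q" arbitrary: p q rule: less_induct)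
  case less
  define p' where "p' = smult r (pcompose p [:1, 1:]) - p"
  define q' where "q' = pcompose q [:1, 1:] - q"
  have eq': "r ^ m * poly p' (of_nat m) = poly q' (of_nat m)" for m
  proof -
    have "r ^ m * poly p' (of_nat m) = r ^ Suc m * poly p (of_nat (Suc m)) - r ^ m * poly p (of_nat m)"
      by (simp add: p'_def poly_pcompose algebra_simps)
    also have "\<dots> = poly q' (of_nat m)"
      using less.prems[of m] less.prems[of "Suc m"] by (simp add: q'_def poly_pcompose algebra_simps)
    finally show ?thesis .
  qed
  have "p' = 0"
  proof (cases "degree q = 0")
    case True
    then have "q' = 0" by (auto simp: q'_def elim: degree_eq_zeroE)
    then show ?thesis
      using eq' assms(1) by (intro poly_eq_0_if_roots_from[of 0]) simp
  next
    case False
    then show ?thesis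
      using less.hyps eq' degree_pcompose_shift_diff_less[of q] unfolding q'_def by simp
  qed
  moreover have "coeff p' (degree p) = (r - 1) * lead_coeff p"
    using lead_coeff_comp[of "[:1, 1:]" p] by (simp add: p'_def degree_pcompose algebra_simps)
  ultimately show "p = 0"
    using assms(2) by auto
qed

lemma pderiv_inject:
  fixes p q :: "'a::{idom, ring_char_0} poly"
  assumes "pderiv p = pderiv q" "coeff p 0 = coeff q 0"
  shows "p = q"
proof -
  have "degree (p - q) = 0"
    using assms(1) by (simp add: pderiv_diff flip: pderiv_eq_0_iff)
  then have "p - q = [:coeff p 0 - coeff q 0:]"
    by (metis coeff_diff degree_0_id)
  then show ?thesis
    using assms(2) by simp
qed

text \<open>Subtract a multiple of an element of top degree and induct on the degree.\<close>

lemma poly_in_subspace_with_all_degrees: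
  fixes S :: "'a::field poly set"
  assumes add: "\<And>p q. p \<in> S \<Longrightarrow> q \<in> S \<Longrightarrow> p + q \<in> S"
    and smult: "\<And>c p. p \<in> S \<Longrightarrow> smult c p \<in> S"
    and degrees: "\<And>n. \<exists>q\<in>S. q \<noteq> 0 \<and> degree q = n"
  shows "p \<in> S"
proof -
  have "degree p \<le> n \<Longrightarrow> p \<in> S" for n p
  proof (induction n arbitrary: p)
    case 0
    obtain q where q: "q \<in> S" "q \<noteq> 0" "degree q = 0" using degrees by blast
    have "q = [:coeff q 0:]" "p = [:coeff p 0:]"
      using q(3) 0 by (simp_all add: degree_0_id)
    then have "p = smult (coeff p 0 / coeff q 0) q"
      using q(2) by (metis nonzero_eq_divide_eq pCons_eq_0_iff smult_pCons smult_0_right)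
    then show ?case using smult q(1) by metis
  next
    case (Suc n)
    obtain q where q: "q \<in> S" "q \<noteq> 0" "degree q = Suc n" using degrees by blast
    define c where "c = coeff p (Suc n) / lead_coeff q"
    have "degree (p - smult c q) \<le> Suc n"
      using Suc.prems q(3) by (intro degree_diff_le) auto
    moreover have "coeff (p - smult c q) (Suc n) = 0"
      using q(2) by (simp add: c_def q(3)[symmetric])
    ultimately have "degree (p - smult c q) \<le> n"
      by (intro degree_le) (metis Suc_lessI coeff_eq_0 le_less_trans)
    then have "p - smult c q + smult c q \<in> S"
      using Suc.IH add smult q(1) by blast
    then show ?case by simp
  qed
  then show ?thesis by blast
qed

lemma linear_poly_map_eqI:
  fixes L M :: "'a::field poly \<Rightarrow> 'a poly"
  assumes "additive L" "\<And>c p. L (smult c p) = smult c (L p)"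
    and "additive M" "\<And>c p. M (smult c p) = smult c (M p)"
    and "\<And>n. L ([:0, 1:] ^ n) = M ([:0, 1:] ^ n)"
  shows "L p = M p"
proof -
  have "p \<in> {p. L p = M p}"
  proof (rule poly_in_subspace_with_all_degrees)
    show "\<exists>q\<in>{p. L p = M p}. q \<noteq> 0 \<and> degree q = n" for n
      using assms(5)[of n] degree_linear_power[of 0 n] by auto
  qed (simp_all add: assms(2,4) additive.add[OF assms(1)] additive.add[OF assms(3)])
  then show ?thesis by simp
qed

lemma coeff_poly_const: "coeff (poly W [:z:]) j = poly (map_poly (\<lambda>f. coeff f j) W) z"
  by (induction W) (simp_all add: map_poly_pCons)

lemma poly_map_poly_const:
  fixes L :: "'a::comm_ring_1 poly \<Rightarrow> 'a poly"
  assumes "additive L" "\<And>c p. L (smult c p) = smult c (L p)"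
  shows "poly (map_poly L W) [:k:] = L (poly W [:k:])"
  by (induction W)
    (simp_all add: map_poly_pCons additive.zero[OF assms(1)] additive.add[OF assms(1)] assms(2))

section \<open>The module \<open>\<Omega>(\<lambda>, \<alpha>, h)\<close> for linear \<open>h\<close>\<close>

lemma additive_smult_poly: "additive (smult c :: 'a::comm_ring_1 poly \<Rightarrow> 'a poly)"
  by unfold_locales (rule smult_add_right)

lemma additive_Fop: "additive (Fop \<alpha> h)"
  by unfold_locales (simp add: Fop_def algebra_simps pderiv_add)

lemma Fop_smult: "Fop \<alpha> h (smult c f) = smult c (Fop \<alpha> h f)"
  by (simp add: Fop_def pderiv_smult smult_diff_right)

lemma additive_Gop: "additive (Gop \<alpha> h)"
  by unfold_locales (simp add: Gop_def additive.add[OF additive_Fop] algebra_simps smult_add_right)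

lemma Gop_smult: "Gop \<alpha> h (smult c f) = smult c (Gop \<alpha> h f)"
  by (simp add: Gop_def Fop_smult smult_add_right mult.commute)

lemma Fop_linear: "Fop \<alpha> [:\<eta>, \<xi>:] f = smult \<xi> f - pderiv f"
proof -
  have quotient: "[:\<eta>, \<xi>:] - [:poly [:\<eta>, \<xi>:] \<alpha>:] = [:\<xi>:] * pCons (- \<alpha>) 1"
    by (simp add: algebra_simps)
  have "([:\<eta>, \<xi>:] - [:poly [:\<eta>, \<xi>:] \<alpha>:]) div pCons (- \<alpha>) 1 = [:\<xi>:]"
    unfolding quotient by (rule nonzero_mult_div_cancel_right) simp
  then show ?thesis by (simp add: Fop_def)
qed

lemma Gop_linear:
  "Gop \<alpha> [:\<eta>, \<xi>:] f = smult (\<eta> + \<alpha> * \<xi>) f + [:0, 1:] * (smult \<xi> f - pderiv f)"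
  by (simp add: Gop_def Fop_linear algebra_simps)

lemma coeff_Fop_linear_degree: "coeff (Fop \<alpha> [:\<eta>, \<xi>:] f) (degree f) = \<xi> * lead_coeff f"
  by (simp add: Fop_linear coeff_pderiv coeff_eq_0)

lemma Fop_linear_eq_0_iff: "\<xi> \<noteq> 0 \<Longrightarrow> Fop \<alpha> [:\<eta>, \<xi>:] f = 0 \<longleftrightarrow> f = 0"
  using coeff_Fop_linear_degree[of \<alpha> \<eta> \<xi> f] by (metis additive.zero[OF additive_Fop] coeff_0
      leading_coeff_0_iff mult_eq_0_iff)

lemma degree_Gop_linear:
  assumes "\<xi> \<noteq> 0" "f \<noteq> 0"
  shows "degree (Gop \<alpha> [:\<eta>, \<xi>:] f) = Suc (degree f)"
proof (rule antisym)
  show "degree (Gop \<alpha> [:\<eta>, \<xi>:] f) \<le> Suc (degree f)"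
    by (rule degree_le) (auto simp: Gop_linear coeff_pderiv coeff_eq_0 coeff_pCons split: nat.split)
  have "coeff (Gop \<alpha> [:\<eta>, \<xi>:] f) (Suc (degree f)) = \<xi> * lead_coeff f"
    by (simp add: Gop_linear coeff_pderiv coeff_eq_0)
  then show "Suc (degree f) \<le> degree (Gop \<alpha> [:\<eta>, \<xi>:] f)"
    using assms by (intro le_degree) simp
qed

text \<open>The operator \<open>G\<close> for \<open>h = \<eta> + \<xi> t\<close>, written in the coordinate \<open>x = h(t)\<close>.\<close>

definition Ghat :: "complex \<Rightarrow> complex \<Rightarrow> complex poly \<Rightarrow> complex poly" where
  "Ghat \<eta> c F = smult (\<eta> + c) F + ([:0, 1:] - [:\<eta>:]) * (F - pderiv F)"

lemma additive_Ghat: "additive (Ghat \<eta> c)"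
  by unfold_locales (simp add: Ghat_def pderiv_add smult_add_right smult_diff_right algebra_simps)

lemma Ghat_smult: "Ghat \<eta> c (smult a F) = smult a (Ghat \<eta> c F)"
  by (simp add: Ghat_def pderiv_smult smult_add_right smult_diff_right algebra_simps)

lemma Gop_linear_pcompose:
  assumes "\<xi> \<noteq> 0"
  shows "Gop \<alpha> [:\<eta>, \<xi>:] (pcompose F [:\<eta>, \<xi>:]) = pcompose (Ghat \<eta> (\<alpha> * \<xi>) F) [:\<eta>, \<xi>:]"
  using assms
  by (simp add: Gop_linear Ghat_def pderiv_pcompose pderiv_pCons pcompose_add pcompose_smult
      pcompose_mult pcompose_diff pcompose_pCons algebra_simps smult_diff_right)

lemma Fop_linear_pcompose:
  "Fop \<alpha> [:\<eta>, \<xi>:] (pcompose F [:\<eta>, \<xi>:]) = smult \<xi> (pcompose (F - pderiv F) [:\<eta>, \<xi>:])"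
  by (simp add: Fop_linear pderiv_pcompose pderiv_pCons pcompose_diff smult_diff_right algebra_simps)

definition dterm :: "complex \<Rightarrow> complex poly \<Rightarrow> complex \<Rightarrow> complex poly \<Rightarrow> cts" where
  "dterm \<alpha> h x f = [:smult x (Gop \<alpha> h f) - smult (x\<^sup>2 * \<alpha>) (Fop \<alpha> h f), f:]"

text \<open>The action of \<open>d\<^sub>m\<close> without the factor \<open>\<lambda>\<^sup>m\<close>, with \<open>m\<close> replaced by an arbitrary \<open>x\<close>.\<close>

definition dact :: "complex \<Rightarrow> complex poly \<Rightarrow> complex \<Rightarrow> cts \<Rightarrow> cts" where
  "dact \<alpha> h x P = (\<Sum>i\<le>degree P. [:[:- x:], 1:] ^ i * dterm \<alpha> h x (coeff P i))"

lemma omega_d_eq_dact: "omega_d l \<alpha> h m P = smult [:l powi m:] (dact \<alpha> h (of_int m) P)"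
  unfolding omega_d_def dact_def dterm_def
  by (simp add: of_int_poly additive.sum[OF additive_smult_poly] one_pCons)

lemma additive_dterm: "additive (dterm \<alpha> h x)"
  by unfold_locales
    (simp add: dterm_def additive.add[OF additive_Fop] additive.add[OF additive_Gop] smult_add_right)

lemma dterm_smult: "dterm \<alpha> h x (smult c f) = smult [:c:] (dterm \<alpha> h x f)"
  by (simp add: dterm_def Fop_smult Gop_smult algebra_simps)

lemma dact_eq_sum_atMost:
  assumes "degree P \<le> n"
  shows "dact \<alpha> h x P = (\<Sum>i\<le>n. [:[:- x:], 1:] ^ i * dterm \<alpha> h x (coeff P i))"
  unfolding dact_def using assms
  by (intro sum.mono_neutral_left) (auto simp: coeff_eq_0 additive.zero[OF additive_dterm])

lemma additive_dact: "additive (dact \<alpha> h x)"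
proof
  fix P Q :: cts
  let ?n = "max (degree P) (degree Q)"
  have "degree (P + Q) \<le> ?n" by (simp add: degree_add_le)
  then show "dact \<alpha> h x (P + Q) = dact \<alpha> h x P + dact \<alpha> h x Q"
    by (simp add: dact_eq_sum_atMost[of P ?n] dact_eq_sum_atMost[of Q ?n]
        dact_eq_sum_atMost[of "P + Q" ?n] additive.add[OF additive_dterm] distrib_left sum.distrib)
qed

lemma dact_cscale: "dact \<alpha> h x (cscale c P) = cscale c (dact \<alpha> h x P)"
proof -
  have "degree (cscale c P) \<le> degree P" by (simp add: cscale_def degree_smult_le)
  then show ?thesis
    by (simp add: dact_eq_sum_atMost[of "cscale c P" "degree P"] dact_def cscale_def dterm_smult
        additive.sum[OF additive_smult_poly] mult_smult_right)
qed

lemma dact_0: "dact \<alpha> h 0 P = [:0, 1:] * P"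
proof -
  have "dact \<alpha> h 0 P = (\<Sum>i\<le>degree P. [:0, 1:] * monom (coeff P i) i)"
    unfolding dact_def dterm_def
    by (intro sum.cong refl) (simp add: monom_altdef smult_monom algebra_simps one_pCons)
  also have "\<dots> = [:0, 1:] * P"
    by (simp only: poly_as_sum_of_monoms flip: sum_distrib_left)
  finally show ?thesis .
qed

lemma dact_const: "dact \<alpha> h x [:f:] = dterm \<alpha> h x f"
  using dact_eq_sum_atMost[of "[:f:]" 0] by simp

lemma poly_dact_const:
  "poly (dact \<alpha> h x P) [:z:] = smult z (poly P [:z - x:]) + smult x (Gop \<alpha> h (poly P [:z - x:]))
     - smult (x\<^sup>2 * \<alpha>) (Fop \<alpha> h (poly P [:z - x:]))"
proof -
  have eval: "poly P [:y:] = (\<Sum>i\<le>degree P. smult (y ^ i) (coeff P i))" for y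
    unfolding poly_altdef by (simp add: poly_const_pow mult.commute)
  have "poly (dact \<alpha> h x P) [:z:] = (\<Sum>i\<le>degree P. smult ((z - x) ^ i)
     (smult z (coeff P i) + smult x (Gop \<alpha> h (coeff P i)) - smult (x\<^sup>2 * \<alpha>) (Fop \<alpha> h (coeff P i))))"
    unfolding dact_def poly_sum dterm_def
    by (intro sum.cong refl) (simp add: poly_const_pow algebra_simps smult_add_right smult_diff_right)
  also have "\<dots> = smult z (poly P [:z - x:]) + smult x (Gop \<alpha> h (poly P [:z - x:]))
     - smult (x\<^sup>2 * \<alpha>) (Fop \<alpha> h (poly P [:z - x:]))"
    unfolding eval additive.sum[OF additive_Gop] additive.sum[OF additive_Fop]
      additive.sum[OF additive_smult_poly]
    by (simp add: smult_add_right smult_diff_right sum.distrib sum_subtractf Gop_smult Fop_smult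
        mult.commute)
  finally show ?thesis .
qed

lemma additive_omega_act: "additive (omega_act l \<alpha> h v)"
  by (cases v; unfold_locales)
    (simp_all add: omega_d_eq_dact additive.add[OF additive_dact] smult_add_right)

lemma omega_act_cscale: "omega_act l \<alpha> h v (cscale c P) = cscale c (omega_act l \<alpha> h v P)"
  by (cases v) (simp_all add: omega_d_eq_dact dact_cscale, simp_all add: cscale_def mult.commute)

section \<open>The polynomials \<open>g\<^sub>n\<close> and the isomorphism\<close>

definition appell :: "complex \<Rightarrow> nat \<Rightarrow> complex poly" where
  "appell \<delta> n = gpoly \<delta> n [:0, 1:]"

lemma coeff_appell:
  "coeff (appell \<delta> n) i = (if i \<le> n then of_nat (n choose i) * bseq \<delta> (n - i) else 0)"
  unfolding appell_def gpoly_def by (simp add: coeff_sum flip: monom_altdef)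

lemma degree_appell: "degree (appell \<delta> n) = n"
  by (intro antisym degree_le le_degree) (simp_all add: coeff_appell)

lemma appell_0: "appell \<delta> 0 = 1"
  by (rule poly_eqI) (simp add: coeff_appell coeff_1)

lemma appell_1: "appell \<delta> 1 = [:0, 1:]"
  by (rule poly_eqI) (auto simp: coeff_appell coeff_pCons split: nat.split)

lemma gpoly_eq_pcompose_appell: "gpoly \<delta> n h = pcompose (appell \<delta> n) h"
proof -
  have "pcompose ([:0, 1:] ^ i) h = h ^ i" for i
    by (induction i) (simp_all add: pcompose_mult pcompose_1 pcompose_pCons)
  then show ?thesis
    unfolding appell_def gpoly_def by (simp add: pcompose_sum pcompose_smult)
qed

lemma pderiv_appell: "pderiv (appell \<delta> n) = smult (of_nat n) (appell \<delta> (n - 1))"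
proof (rule poly_eqI)
  fix i
  show "coeff (pderiv (appell \<delta> n)) i = coeff (smult (of_nat n) (appell \<delta> (n - 1))) i"
  proof (cases n)
    case (Suc m)
    have "of_nat (Suc i) * of_nat (Suc m choose Suc i)
        = (of_nat (Suc m) * of_nat (m choose i) :: complex)"
      using Suc_times_binomial[of i m] by (metis of_nat_mult)
    then show ?thesis
      using Suc
      by (simp add: coeff_pderiv coeff_appell mult.assoc[symmetric] del: binomial_Suc_Suc of_nat_Suc)
  qed (simp add: coeff_pderiv coeff_appell)
qed

text \<open>By induction both sides have derivative \<open>(n + 1) g\<^sub>n\<close>; their constant terms agree by the
  recursion of \<open>b\<close>.\<close>

lemma appell_Suc:
  "appell \<delta> (Suc n) = [:0, 1:] * appell \<delta> n + smult (of_nat n) (appell \<delta> n)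
     - smult (of_nat n) ([:0, 1:] * appell \<delta> (n - 1)) + smult (of_nat n * \<delta>) (appell \<delta> (n - 1))"
  (is "_ = ?R n")
proof (induction n)
  case 0
  then show ?case using appell_1[of \<delta>] by (simp add: appell_0)
next
  case (Suc n)
  let ?X = "[:0, 1 :: complex:]" and ?k = "of_nat n :: complex"
  let ?P = "appell \<delta> (Suc n)" and ?Q = "appell \<delta> n" and ?S = "appell \<delta> (n - 1)"
  have "pderiv (?R (Suc n)) = ?P + ?X * smult (?k + 1) ?Q + smult (?k + 1) (smult (?k + 1) ?Q)
      - smult (?k + 1) (?Q + ?X * smult ?k ?S) + smult ((?k + 1) * \<delta>) (smult ?k ?S)"
    by (simp add: pderiv_add pderiv_diff pderiv_mult pderiv_smult pderiv_appell pderiv_pCons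
        smult_add_right mult.commute add.commute)
  also have "\<dots> = ?P + smult (?k + 1) (?R n)"
    by (simp add: smult_add_right smult_diff_right smult_add_left algebra_simps)
  finally have "pderiv (?R (Suc n)) = ?P + smult (?k + 1) ?P"
    by (simp only: Suc.IH[symmetric])
  then have "pderiv (appell \<delta> (Suc (Suc n))) = pderiv (?R (Suc n))"
    by (simp only: pderiv_appell diff_Suc_1 of_nat_Suc smult_add_left smult_1_left add_ac)
  moreover have "coeff (appell \<delta> (Suc (Suc n))) 0 = coeff (?R (Suc n)) 0"
    by (simp add: coeff_appell algebra_simps del: of_nat_Suc)
  ultimately show ?case
    by (rule pderiv_inject)
qed

definition appell_map :: "complex \<Rightarrow> complex poly \<Rightarrow> complex poly" where
  "appell_map \<delta> F = (\<Sum>k\<le>degree F. smult (coeff F k) (appell \<delta> k))"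

lemma appell_map_eq_sum_atMost:
  "degree F \<le> n \<Longrightarrow> appell_map \<delta> F = (\<Sum>k\<le>n. smult (coeff F k) (appell \<delta> k))"
  unfolding appell_map_def by (rule sum.mono_neutral_left) (auto simp: coeff_eq_0)

lemma additive_appell_map: "additive (appell_map \<delta>)"
proof
  fix F G :: "complex poly"
  let ?n = "max (degree F) (degree G)"
  have "degree (F + G) \<le> ?n" by (simp add: degree_add_le)
  then show "appell_map \<delta> (F + G) = appell_map \<delta> F + appell_map \<delta> G"
    by (simp add: appell_map_eq_sum_atMost[of F ?n] appell_map_eq_sum_atMost[of G ?n]
        appell_map_eq_sum_atMost[of "F + G" ?n] smult_add_left sum.distrib)
qed

lemma appell_map_smult: "appell_map \<delta> (smult c F) = smult c (appell_map \<delta> F)"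
  using appell_map_eq_sum_atMost[of "smult c F" "degree F"]
  by (simp add: appell_map_def degree_smult_le additive.sum[OF additive_smult_poly])

lemma appell_map_X_power: "appell_map \<delta> ([:0, 1:] ^ n) = appell \<delta> n"
proof -
  have "(\<Sum>k\<le>n. smult (coeff (monom 1 n) k) (appell \<delta> k)) = (\<Sum>k\<le>n. if k = n then appell \<delta> k else 0)"
    by (intro sum.cong) (auto simp: coeff_monom)
  then show ?thesis
    by (simp add: appell_map_def degree_monom_eq flip: monom_altdef[of 1, simplified])
qed

lemma coeff_appell_map_degree: "coeff (appell_map \<delta> F) (degree F) = lead_coeff F"
proof -
  have "coeff (appell_map \<delta> F) (degree F) = (\<Sum>k\<le>degree F. coeff F k * coeff (appell \<delta> k) (degree F))"
    by (simp add: appell_map_def coeff_sum)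
  also have "\<dots> = (\<Sum>k\<in>{degree F}. coeff F k * coeff (appell \<delta> k) (degree F))"
    by (rule sum.mono_neutral_right) (auto simp: coeff_appell)
  finally show ?thesis by (simp add: coeff_appell)
qed

lemma appell_map_eq_0_iff: "appell_map \<delta> F = 0 \<longleftrightarrow> F = 0"
  using coeff_appell_map_degree[of \<delta> F] by (auto simp: appell_map_def)

lemma surj_appell_map: "surj (appell_map \<delta>)"
proof -
  have "G \<in> range (appell_map \<delta>)" for G
  proof (rule poly_in_subspace_with_all_degrees)
    show "P + Q \<in> range (appell_map \<delta>)" if "P \<in> range (appell_map \<delta>)" "Q \<in> range (appell_map \<delta>)" for P Q
      using that by (auto simp: additive.add[OF additive_appell_map, symmetric])
    show "smult c P \<in> range (appell_map \<delta>)" if "P \<in> range (appell_map \<delta>)" for c P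
      using that by (auto simp: appell_map_smult[symmetric])
    show "\<exists>q\<in>range (appell_map \<delta>). q \<noteq> 0 \<and> degree q = n" for n
    proof
      show "appell \<delta> n \<noteq> 0 \<and> degree (appell \<delta> n) = n"
        using degree_appell[of \<delta> n] coeff_appell[of \<delta> n n] by auto
    qed (metis rangeI appell_map_X_power)
  qed
  then show ?thesis by blast
qed

lemma appell_map_pderiv: "appell_map \<delta> (pderiv F) = pderiv (appell_map \<delta> F)"
proof (rule linear_poly_map_eqI[where L = "\<lambda>F. appell_map \<delta> (pderiv F)"])
  show "additive (\<lambda>F. appell_map \<delta> (pderiv F))"
    by unfold_locales (simp add: additive.add[OF additive_appell_map] pderiv_add)
  show "additive (\<lambda>F. pderiv (appell_map \<delta> F))"
    by unfold_locales (simp add: additive.add[OF additive_appell_map] pderiv_add)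
  show "appell_map \<delta> (pderiv ([:0, 1:] ^ n)) = pderiv (appell_map \<delta> ([:0, 1:] ^ n))" for n
    by (simp add: pderiv_power appell_map_smult appell_map_X_power pderiv_appell pderiv_pCons)
qed (simp_all add: appell_map_smult pderiv_smult)

lemma appell_map_Ghat:
  "appell_map (\<eta>2 - \<eta>1) (Ghat \<eta>1 c F) = Ghat \<eta>2 c (appell_map (\<eta>2 - \<eta>1) F)"
proof (rule linear_poly_map_eqI[where L = "\<lambda>F. appell_map (\<eta>2 - \<eta>1) (Ghat \<eta>1 c F)"])
  show "additive (\<lambda>F. appell_map (\<eta>2 - \<eta>1) (Ghat \<eta>1 c F))"
    by unfold_locales (simp add: additive.add[OF additive_appell_map] additive.add[OF additive_Ghat])
  show "additive (\<lambda>F. Ghat \<eta>2 c (appell_map (\<eta>2 - \<eta>1) F))"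
    by unfold_locales (simp add: additive.add[OF additive_appell_map] additive.add[OF additive_Ghat])
  fix n
  let ?g = "appell (\<eta>2 - \<eta>1)" and ?T = "appell_map (\<eta>2 - \<eta>1)" and ?X = "[:0, 1 :: complex:]"
  note T_simps = additive.add[OF additive_appell_map] additive.diff[OF additive_appell_map]
    appell_map_smult appell_map_X_power
  show "?T (Ghat \<eta>1 c (?X ^ n)) = Ghat \<eta>2 c (?T (?X ^ n))"
  proof (cases n)
    case 0
    have "Ghat \<eta> c 1 = smult c 1 + ?X" for \<eta>
      by (simp add: Ghat_def algebra_simps)
    moreover have "?T (smult c 1 + ?X) = smult c (?T (?X ^ 0)) + ?T (?X ^ 1)"
      by (simp only: T_simps power_0 power_one_right)
    then have "?T (smult c 1 + ?X) = smult c 1 + ?X"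
      by (simp only: appell_map_X_power appell_0 appell_1)
    ultimately show ?thesis
      using 0 appell_map_X_power[of _ 0] by (simp add: appell_0)
  next
    case (Suc m)
    let ?k = "of_nat (Suc m) :: complex"
    have "pderiv (?X ^ Suc m) = smult ?k (?X ^ m)"
      by (simp only: pderiv_power_Suc) (simp add: pderiv_pCons)
    then have "Ghat \<eta>1 c (?X ^ Suc m)
        = ?X ^ Suc (Suc m) + smult c (?X ^ Suc m) - smult ?k (?X ^ Suc m) + smult (?k * \<eta>1) (?X ^ m)"
      by (simp add: Ghat_def smult_add_right smult_diff_right smult_add_left algebra_simps)
    then have "?T (Ghat \<eta>1 c (?X ^ n)) = ?g (Suc (Suc m)) + smult c (?g (Suc m))
        - smult ?k (?g (Suc m)) + smult (?k * \<eta>1) (?g m)"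
      using Suc by (simp only: T_simps)
    also have "\<dots> = smult (\<eta>2 + c) (?g (Suc m)) + (?X - [:\<eta>2:]) * (?g (Suc m) - smult ?k (?g m))"
      by (subst appell_Suc[of _ "Suc m"])
        (simp add: smult_add_right smult_diff_right smult_add_left smult_diff_left algebra_simps
          del: of_nat_Suc)
    also have "\<dots> = Ghat \<eta>2 c (?T (?X ^ n))"
      unfolding Suc appell_map_X_power Ghat_def pderiv_appell by simp
    finally show ?thesis .
  qed
qed (simp_all add: appell_map_smult Ghat_smult)

definition affine_inv :: "complex \<Rightarrow> complex \<Rightarrow> complex poly" where
  "affine_inv \<eta> \<xi> = [:- \<eta> / \<xi>, 1 / \<xi>:]"

lemma pcompose_affine_inv_cancel:
  assumes "\<xi> \<noteq> 0"
  shows "pcompose (pcompose f (affine_inv \<eta> \<xi>)) [:\<eta>, \<xi>:] = f"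
    and "pcompose (pcompose f [:\<eta>, \<xi>:]) (affine_inv \<eta> \<xi>) = f"
  using assms
  by (simp_all add: affine_inv_def pcompose_pCons field_simps flip: pcompose_assoc)

lemma clinear_imp_additive: "clinear \<phi> \<Longrightarrow> additive \<phi>"
  unfolding clinear_def by unfold_locales blast

lemma clinear_cscale: "clinear \<phi> \<Longrightarrow> \<phi> (cscale c P) = cscale c (\<phi> P)"
  unfolding clinear_def by blast

lemma cscale_cscale: "cscale a (cscale b P) = cscale (a * b) P"
  by (simp add: cscale_def mult.commute)

lemma cscale_1 [simp]: "cscale 1 P = P"
  by (simp add: cscale_def flip: one_pCons)

lemma cscale_cancel: "c \<noteq> 0 \<Longrightarrow> cscale c P = cscale c Q \<longleftrightarrow> P = Q"
  unfolding cscale_def by (auto intro: smult_cancel[of "[:c:]"])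

lemma additive_cscale: "additive (cscale c)"
  by unfold_locales (simp add: cscale_def smult_add_right)

lemma clinear_cscale_comp: "clinear \<phi> \<Longrightarrow> clinear (\<lambda>P. cscale c (\<phi> P))"
  unfolding clinear_def by (simp add: additive.add[OF additive_cscale] cscale_cscale mult.commute)

lemma clinear_diff_cscale:
  "clinear \<phi> \<Longrightarrow> clinear \<chi> \<Longrightarrow> clinear (\<lambda>P. \<phi> P - cscale c (\<chi> P))"
  unfolding clinear_def
  by (simp add: additive.add[OF additive_cscale] additive.diff[OF additive_cscale] cscale_cscale
      mult.commute)

lemma clinear_eqI_affine_power_monoms:
  assumes "clinear \<phi>" "clinear \<chi>" "\<xi> \<noteq> 0"
    and "\<And>n i. \<phi> (monom ([:\<eta>, \<xi>:] ^ n) i) = \<chi> (monom ([:\<eta>, \<xi>:] ^ n) i)"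
  shows "\<phi> P = \<chi> P"
proof -
  note add = additive.add[OF clinear_imp_additive[OF assms(1)]]
    additive.add[OF clinear_imp_additive[OF assms(2)]]
  have "f \<in> {f. \<phi> (monom f i) = \<chi> (monom f i)}" for f i
  proof (rule poly_in_subspace_with_all_degrees)
    have "monom (smult c f) i = cscale c (monom f i)" for c f
      by (simp add: cscale_def smult_monom)
    then show "smult c f \<in> {f. \<phi> (monom f i) = \<chi> (monom f i)}"
      if "f \<in> {f. \<phi> (monom f i) = \<chi> (monom f i)}" for c f
      using that by (simp add: clinear_cscale[OF assms(1)] clinear_cscale[OF assms(2)])
    show "f + g \<in> {f. \<phi> (monom f i) = \<chi> (monom f i)}"
      if "f \<in> {f. \<phi> (monom f i) = \<chi> (monom f i)}" "g \<in> {f. \<phi> (monom f i) = \<chi> (monom f i)}" for f g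
      using that by (simp add: add flip: add_monom)
    show "\<exists>q\<in>{f. \<phi> (monom f i) = \<chi> (monom f i)}. q \<noteq> 0 \<and> degree q = n" for n
      using assms(3,4) by (intro bexI[of _ "[:\<eta>, \<xi>:] ^ n"]) (simp_all add: degree_power_eq)
  qed
  then have "(\<Sum>i\<le>degree P. \<phi> (monom (coeff P i) i)) = (\<Sum>i\<le>degree P. \<chi> (monom (coeff P i) i))"
    by simp
  then show ?thesis
    by (simp add: poly_as_sum_of_monoms flip: additive.sum[OF clinear_imp_additive[OF assms(1)]]
        additive.sum[OF clinear_imp_additive[OF assms(2)]])
qed

locale affine_pair =
  fixes \<eta>1 \<xi>1 \<eta>2 \<xi>2 :: complex
  assumes \<xi>1: "\<xi>1 \<noteq> 0" and \<xi>2: "\<xi>2 \<noteq> 0"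
begin

definition tmap :: "complex poly \<Rightarrow> complex poly" where
  "tmap f = pcompose (appell_map (\<eta>2 - \<eta>1) (pcompose f (affine_inv \<eta>1 \<xi>1))) [:\<eta>2, \<xi>2:]"

lemma additive_tmap: "additive tmap"
  by unfold_locales (simp add: tmap_def pcompose_add additive.add[OF additive_appell_map])

lemma tmap_smult: "tmap (smult c f) = smult c (tmap f)"
  by (simp add: tmap_def pcompose_smult appell_map_smult)

lemma tmap_h1_power: "tmap ([:\<eta>1, \<xi>1:] ^ n) = gpoly (\<eta>2 - \<eta>1) n [:\<eta>2, \<xi>2:]"
proof -
  have "pcompose [:\<eta>1, \<xi>1:] (affine_inv \<eta>1 \<xi>1) = [:0, 1:]"
    using \<xi>1 by (simp add: affine_inv_def pcompose_pCons field_simps)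
  then have "pcompose ([:\<eta>1, \<xi>1:] ^ n) (affine_inv \<eta>1 \<xi>1) = [:0, 1:] ^ n"
    by (induction n) (simp_all only: power_0 power_Suc pcompose_1 pcompose_mult)
  then show ?thesis by (simp add: tmap_def appell_map_X_power gpoly_eq_pcompose_appell)
qed

lemma tmap_Gop:
  assumes "\<alpha>1 * \<xi>1 = \<alpha>2 * \<xi>2"
  shows "tmap (Gop \<alpha>1 [:\<eta>1, \<xi>1:] f) = Gop \<alpha>2 [:\<eta>2, \<xi>2:] (tmap f)"
proof -
  let ?F = "pcompose f (affine_inv \<eta>1 \<xi>1)"
  have "tmap (Gop \<alpha>1 [:\<eta>1, \<xi>1:] f) = pcompose (appell_map (\<eta>2 - \<eta>1) (Ghat \<eta>1 (\<alpha>1 * \<xi>1) ?F)) [:\<eta>2, \<xi>2:]"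
    using Gop_linear_pcompose[OF \<xi>1, of \<alpha>1 \<eta>1 ?F]
    by (simp add: tmap_def pcompose_affine_inv_cancel[OF \<xi>1])
  also have "\<dots> = Gop \<alpha>2 [:\<eta>2, \<xi>2:] (tmap f)"
    by (simp add: tmap_def appell_map_Ghat assms Gop_linear_pcompose[OF \<xi>2])
  finally show ?thesis .
qed

lemma tmap_Fop:
  assumes "\<alpha>1 * \<xi>1 = \<alpha>2 * \<xi>2"
  shows "smult \<alpha>1 (tmap (Fop \<alpha>1 [:\<eta>1, \<xi>1:] f)) = smult \<alpha>2 (Fop \<alpha>2 [:\<eta>2, \<xi>2:] (tmap f))"
proof -
  let ?F = "pcompose f (affine_inv \<eta>1 \<xi>1)"
  have "smult \<alpha>1 (tmap (Fop \<alpha>1 [:\<eta>1, \<xi>1:] f))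
      = smult (\<alpha>1 * \<xi>1) (pcompose (appell_map (\<eta>2 - \<eta>1) (?F - pderiv ?F)) [:\<eta>2, \<xi>2:])"
    using Fop_linear_pcompose[of \<alpha>1 \<eta>1 \<xi>1 ?F]
    by (simp add: tmap_def pcompose_affine_inv_cancel[OF \<xi>1] pcompose_smult appell_map_smult)
  also have "\<dots> = smult \<alpha>2 (Fop \<alpha>2 [:\<eta>2, \<xi>2:] (tmap f))"
    by (simp add: tmap_def Fop_linear_pcompose assms additive.diff[OF additive_appell_map]
        appell_map_pderiv)
  finally show ?thesis .
qed

lemma tmap_eq_0_iff: "tmap f = 0 \<longleftrightarrow> f = 0"
proof -
  have "tmap f = 0 \<longleftrightarrow> appell_map (\<eta>2 - \<eta>1) (pcompose f (affine_inv \<eta>1 \<xi>1)) = 0"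
    unfolding tmap_def by (metis pcompose_0 pcompose_affine_inv_cancel(2)[OF \<xi>2])
  then show ?thesis
    by (metis appell_map_eq_0_iff pcompose_0 pcompose_affine_inv_cancel(1)[OF \<xi>1])
qed

lemma surj_tmap: "surj tmap"
proof -
  have "g \<in> range tmap" for g
  proof -
    obtain F where "appell_map (\<eta>2 - \<eta>1) F = pcompose g (affine_inv \<eta>2 \<xi>2)"
      using surj_appell_map by (metis surjD)
    then have "tmap (pcompose F [:\<eta>1, \<xi>1:]) = g"
      by (simp add: tmap_def pcompose_affine_inv_cancel[OF \<xi>1] pcompose_affine_inv_cancel[OF \<xi>2])
    then show "g \<in> range tmap" by (metis rangeI)
  qed
  then show ?thesis by blast
qed

definition Phi :: "cts \<Rightarrow> cts" where
  "Phi P = map_poly tmap P"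

lemma coeff_Phi: "coeff (Phi P) i = tmap (coeff P i)"
  by (simp add: Phi_def coeff_map_poly additive.zero[OF additive_tmap])

lemma Phi_monom: "Phi (monom f i) = monom (tmap f) i"
  by (simp add: Phi_def map_poly_monom additive.zero[OF additive_tmap])

lemma Phi_h1_power_monom:
  "Phi (monom ([:\<eta>1, \<xi>1:] ^ n) i) = monom (gpoly (\<eta>2 - \<eta>1) n [:\<eta>2, \<xi>2:]) i"
  by (simp only: Phi_monom tmap_h1_power)

lemma Phi_1: "Phi 1 = 1"
  using Phi_h1_power_monom[of 0 0] by (simp add: gpoly_def monom_0 one_pCons)

lemma clinear_Phi: "clinear Phi"
  unfolding clinear_def
  by (auto intro!: poly_eqI simp: coeff_Phi cscale_def additive.add[OF additive_tmap] tmap_smult)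

lemma bij_Phi: "bij Phi"
proof (rule bijI)
  show "inj Phi"
  proof (rule injI)
    fix P Q
    assume "Phi P = Phi Q"
    then have "tmap (coeff P i - coeff Q i) = 0" for i
      by (metis additive.diff[OF additive_tmap] coeff_Phi diff_self)
    then show "P = Q"
      by (intro poly_eqI) (simp add: tmap_eq_0_iff)
  qed
  have "inv tmap 0 = 0"
    using surj_f_inv_f[OF surj_tmap, of 0] tmap_eq_0_iff by blast
  then have "Phi (map_poly (inv tmap) Q) = Q" for Q
    by (intro poly_eqI) (simp add: coeff_Phi coeff_map_poly surj_f_inv_f[OF surj_tmap])
  then show "surj Phi" by (metis surjI)
qed

lemma Phi_linear_power_mult: "Phi ([:[:a:], 1:] ^ i * Q) = [:[:a:], 1:] ^ i * Phi Q"
proof (induction i arbitrary: Q)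
  case (Suc i)
  have "Phi (smult [:a:] Q) = smult [:a:] (Phi Q)" for Q
    using clinear_cscale[OF clinear_Phi, of a Q] by (simp add: cscale_def)
  moreover have "Phi (pCons 0 Q) = pCons 0 (Phi Q)" for Q
    by (simp add: Phi_def map_poly_pCons additive.zero[OF additive_tmap])
  ultimately have "Phi ([:[:a:], 1:] * Q) = [:[:a:], 1:] * Phi Q" for Q
    by (simp add: additive.add[OF clinear_imp_additive[OF clinear_Phi]])
  then show ?case
    using Suc.IH by (simp only: power_Suc mult.assoc)
qed simp

context
  fixes \<alpha>1 \<alpha>2 :: complex
  assumes compatible: "\<alpha>1 * \<xi>1 = \<alpha>2 * \<xi>2"
begin

lemma Phi_dterm: "Phi (dterm \<alpha>1 [:\<eta>1, \<xi>1:] x f) = dterm \<alpha>2 [:\<eta>2, \<xi>2:] x (tmap f)"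
proof -
  have "smult (x\<^sup>2 * \<alpha>1) (tmap (Fop \<alpha>1 [:\<eta>1, \<xi>1:] f)) = smult (x\<^sup>2 * \<alpha>2) (Fop \<alpha>2 [:\<eta>2, \<xi>2:] (tmap f))"
    using tmap_Fop[OF compatible, of f] by (metis smult_smult)
  then show ?thesis
    by (simp add: dterm_def Phi_def map_poly_pCons additive.diff[OF additive_tmap] tmap_smult
        tmap_Gop[OF compatible] additive.zero[OF additive_tmap])
qed

lemma Phi_dact: "Phi (dact \<alpha>1 [:\<eta>1, \<xi>1:] x P) = dact \<alpha>2 [:\<eta>2, \<xi>2:] x (Phi P)"
proof -
  have "degree (Phi P) \<le> degree P" by (simp add: Phi_def map_poly_degree_leq)
  moreover have "Phi (dact \<alpha>1 [:\<eta>1, \<xi>1:] x P)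
     = (\<Sum>i\<le>degree P. [:[:- x:], 1:] ^ i * dterm \<alpha>2 [:\<eta>2, \<xi>2:] x (coeff (Phi P) i))"
    unfolding dact_def additive.sum[OF clinear_imp_additive[OF clinear_Phi]]
    by (simp add: Phi_linear_power_mult Phi_dterm coeff_Phi)
  ultimately show ?thesis
    by (simp add: dact_eq_sum_atMost)
qed

lemma Phi_omega_act:
  "Phi (omega_act l \<alpha>1 [:\<eta>1, \<xi>1:] v P) = omega_act l \<alpha>2 [:\<eta>2, \<xi>2:] v (Phi P)"
  using clinear_cscale[OF clinear_Phi, unfolded cscale_def]
  by (cases v)
    (simp_all add: omega_d_eq_dact Phi_dact additive.zero[OF clinear_imp_additive[OF clinear_Phi]])

lemma omega_iso_cscale_Phi:
  assumes "c \<noteq> 0"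
  shows "omega_iso l \<alpha>1 [:\<eta>1, \<xi>1:] l \<alpha>2 [:\<eta>2, \<xi>2:] (\<lambda>P. cscale c (Phi P))"
  unfolding omega_iso_def
proof (intro conjI allI)
  show "clinear (\<lambda>P. cscale c (Phi P))"
    by (rule clinear_cscale_comp[OF clinear_Phi])
  have "bij (cscale c)"
    using assms by (intro o_bij[of "cscale (1 / c)"]) (auto simp: cscale_cscale)
  then show "bij (\<lambda>P. cscale c (Phi P))"
    using bij_comp[OF bij_Phi] by (simp add: comp_def)
  show "cscale c (Phi (omega_act l \<alpha>1 [:\<eta>1, \<xi>1:] v P)) = omega_act l \<alpha>2 [:\<eta>2, \<xi>2:] v (cscale c (Phi P))"
    for v P
    by (simp add: Phi_omega_act omega_act_cscale)
qed

end

end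

section \<open>Homomorphisms are multiples of \<open>\<phi>\<close>\<close>

locale omega_hom = affine_pair +
  fixes l1 l2 \<alpha>1 \<alpha>2 :: complex and \<psi> :: "cts \<Rightarrow> cts"
  assumes l1: "l1 \<noteq> 0" and l2: "l2 \<noteq> 0" and \<alpha>2: "\<alpha>2 \<noteq> 0"
    and linear: "clinear \<psi>"
    and hom: "\<And>v P. \<psi> (omega_act l1 \<alpha>1 [:\<eta>1, \<xi>1:] v P) = omega_act l2 \<alpha>2 [:\<eta>2, \<xi>2:] v (\<psi> P)"
begin

abbreviation "h1 \<equiv> [:\<eta>1, \<xi>1:]"
abbreviation "h2 \<equiv> [:\<eta>2, \<xi>2:]"

lemmas psi_add = additive.add[OF clinear_imp_additive[OF linear]]
lemmas psi_diff = additive.diff[OF clinear_imp_additive[OF linear]]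
lemmas psi_cscale = clinear_cscale[OF linear]

lemma hom_dact:
  "cscale (l1 powi m) (\<psi> (dact \<alpha>1 h1 (of_int m) P)) = cscale (l2 powi m) (dact \<alpha>2 h2 (of_int m) (\<psi> P))"
  using hom[of "Dvir m" P] psi_cscale by (simp add: omega_d_eq_dact cscale_def)

lemma psi_X_mult: "\<psi> ([:0, 1:] * P) = [:0, 1:] * \<psi> P"
  using hom_dact[of 0 P] by (simp add: dact_0)

lemma psi_monom: "\<psi> (monom f i) = [:0, 1:] ^ i * \<psi> [:f:]"
proof (induction i)
  case (Suc i)
  then show ?case
    using psi_X_mult[of "monom f i"] by (simp add: monom_Suc)
qed (simp add: monom_0)

text \<open>\<open>d\<^sub>1 - d\<^sub>-\<^sub>1\<close> applied to \<open>f\<close> is \<open>2 G(f)\<close>, in degree zero in \<open>s\<close>.\<close>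

lemma psi_const_Gop: "\<psi> [:f:] = 0 \<Longrightarrow> \<psi> [:Gop \<alpha>1 h1 f:] = 0"
proof -
  assume f: "\<psi> [:f:] = 0"
  have "\<psi> (dact \<alpha>1 h1 (of_int m) [:f:]) = 0" for m
    using hom_dact[of m "[:f:]"] l1 by (simp add: f additive.zero[OF additive_dact] cscale_def)
  then have "\<psi> (dact \<alpha>1 h1 1 [:f:] - dact \<alpha>1 h1 (-1) [:f:]) = 0"
    using psi_diff by (metis of_int_1 of_int_minus diff_self)
  moreover have "dact \<alpha>1 h1 1 [:f:] - dact \<alpha>1 h1 (-1) [:f:] = cscale 2 [:Gop \<alpha>1 h1 f:]"
    by (simp add: dact_const dterm_def cscale_def numeral_poly)
  ultimately have "cscale 2 (\<psi> [:Gop \<alpha>1 h1 f:]) = 0"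
    by (metis psi_cscale)
  then show ?thesis
    by (simp add: cscale_def)
qed

lemma eq_0_if_psi_1_eq_0:
  assumes "\<psi> 1 = 0"
  shows "\<psi> P = 0"
proof -
  have "f \<in> {f. \<psi> [:f:] = 0}" for f
  proof (rule poly_in_subspace_with_all_degrees)
    show "\<exists>q\<in>{f. \<psi> [:f:] = 0}. q \<noteq> 0 \<and> degree q = n" for n
    proof (induction n)
      case 0
      show ?case using assms by (intro bexI[of _ 1]) (simp_all add: one_pCons)
    next
      case (Suc n)
      then obtain q where "\<psi> [:q:] = 0" "q \<noteq> 0" "degree q = n" by blast
      then show ?case
        using degree_Gop_linear[OF \<xi>1, of q \<alpha>1 \<eta>1] psi_const_Gop
        by (intro bexI[of _ "Gop \<alpha>1 h1 q"]) auto
    qed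
    show "p + q \<in> {f. \<psi> [:f:] = 0}" if "p \<in> {f. \<psi> [:f:] = 0}" "q \<in> {f. \<psi> [:f:] = 0}" for p q
      using that psi_add[of "[:p:]" "[:q:]"] by simp
    show "smult c p \<in> {f. \<psi> [:f:] = 0}" if "p \<in> {f. \<psi> [:f:] = 0}" for c p
      using that psi_cscale[of c "[:p:]"] by (simp add: cscale_def)
  qed
  then have "\<psi> (monom (coeff P i) i) = 0" for i
    by (simp add: psi_monom)
  then have "\<psi> (\<Sum>i\<le>degree P. monom (coeff P i) i) = 0"
    by (simp add: additive.sum[OF clinear_imp_additive[OF linear]])
  then show ?thesis
    by (simp only: poly_as_sum_of_monoms)
qed

lemma psi_dact_1:
  "\<psi> (dact \<alpha>1 h1 x 1) = [:0, 1:] * \<psi> 1 + cscale x (\<psi> [:Gop \<alpha>1 h1 1:])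
     - cscale (x\<^sup>2 * \<alpha>1) (\<psi> [:Fop \<alpha>1 h1 1:])"
proof -
  have "dact \<alpha>1 h1 x 1 = [:0, 1:] * 1 + cscale x [:Gop \<alpha>1 h1 1:] - cscale (x\<^sup>2 * \<alpha>1) [:Fop \<alpha>1 h1 1:]"
    using dact_const[of \<alpha>1 h1 x 1] by (simp add: dterm_def cscale_def one_pCons)
  then show ?thesis
    by (simp only: psi_add psi_diff psi_cscale psi_X_mult)
qed

text \<open>If \<open>\<lambda>\<^sub>1 \<noteq> \<lambda>\<^sub>2\<close>, evaluating the action of \<open>d\<^sub>m\<close> on \<open>1\<close> at \<open>s = m + y\<close> expresses
  \<open>(\<lambda>\<^sub>2/\<lambda>\<^sub>1)\<^sup>m\<close> times a polynomial in \<open>m\<close> as a polynomial in \<open>m\<close>, whose constant term is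
  \<open>y\<close> times the value of \<open>\<psi>(1)\<close> at \<open>s = y\<close>.\<close>

lemma psi_1_eval_eq_0_if_l1_neq_l2:
  assumes "l1 \<noteq> l2" "y \<noteq> 0"
  shows "poly (\<psi> 1) [:y:] = 0"
proof (rule poly_eqI)
  fix j
  let ?w = "\<psi> 1" and ?A = "\<psi> [:Gop \<alpha>1 h1 1:]" and ?B = "\<psi> [:Fop \<alpha>1 h1 1:]"
  let ?a = "poly ?w [:y:]"
  define cj where "cj W = pcompose (map_poly (\<lambda>f. coeff f j) W) [:y, 1:]" for W :: cts
  define p where "p = [:y, 1:] * cj ?w + [:0, 1:] * cj ?A - smult \<alpha>1 ([:0, 0, 1:] * cj ?B)"
  define q where
    "q = [:y * coeff ?a j, coeff ?a j + coeff (Gop \<alpha>2 h2 ?a) j, - (\<alpha>2 * coeff (Fop \<alpha>2 h2 ?a) j):]"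
  have "(l2 / l1) ^ m * poly q (of_nat m) = poly p (of_nat m)" for m
  proof -
    have "coeff (poly (cscale (l1 ^ m) (\<psi> (dact \<alpha>1 h1 (of_nat m) 1))) [:of_nat m + y:]) j
        = l1 ^ m * poly p (of_nat m)"
      unfolding psi_dact_1
      by (simp add: cscale_def p_def cj_def coeff_poly_const poly_pcompose algebra_simps
          power2_eq_square)
    moreover have "coeff (poly (cscale (l2 ^ m) (dact \<alpha>2 h2 (of_nat m) ?w)) [:of_nat m + y:]) j
        = l2 ^ m * poly q (of_nat m)"
      unfolding cscale_def poly_smult poly_dact_const
      by (simp add: q_def algebra_simps power2_eq_square)
    ultimately have "l1 ^ m * poly p (of_nat m) = l2 ^ m * poly q (of_nat m)"
      using hom_dact[of "int m" 1] by simp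
    then show ?thesis
      using l1 by (simp add: power_divide field_simps)
  qed
  then have "q = 0"
    using assms(1) l1 l2
    by (intro power_mult_poly_eq_poly_imp_zero[of "l2 / l1"]) (simp_all add: field_simps)
  then show "coeff ?a j = coeff 0 j"
    using assms(2) by (simp add: q_def)
qed

lemma l1_eq_l2_if_psi_1_neq_0:
  assumes "\<psi> 1 \<noteq> 0"
  shows "l1 = l2"
proof (rule ccontr)
  assume "l1 \<noteq> l2"
  have "map_poly (\<lambda>f. coeff f j) (\<psi> 1) = 0" for j
    using psi_1_eval_eq_0_if_l1_neq_l2[OF \<open>l1 \<noteq> l2\<close>]
    by (intro poly_eq_0_if_roots_from[of 1]) (simp flip: coeff_poly_const)
  then have "\<psi> 1 = 0"
    by (intro poly_eqI) (metis coeff_0 coeff_map_poly)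
  then show False
    using assms by simp
qed

lemma hom_dact_eq:
  assumes "l1 = l2"
  shows "\<psi> (dact \<alpha>1 h1 (of_int m) P) = dact \<alpha>2 h2 (of_int m) (\<psi> P)"
  using hom_dact[of m P] assms l1 by (simp add: cscale_cancel)

lemma hom_dact_1_eval_0:
  assumes "l1 = l2" and "x \<in> \<int>"
  shows "smult x (poly (\<psi> [:Gop \<alpha>1 h1 1:]) 0) - smult (x\<^sup>2 * \<alpha>1) (poly (\<psi> [:Fop \<alpha>1 h1 1:]) 0)
    = smult x (Gop \<alpha>2 h2 (poly (\<psi> 1) [:- x:])) - smult (x\<^sup>2 * \<alpha>2) (Fop \<alpha>2 h2 (poly (\<psi> 1) [:- x:]))"
proof -
  obtain m where m: "x = of_int m" using assms(2) by (auto elim: Ints_cases)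
  have "poly (\<psi> (dact \<alpha>1 h1 x 1)) [:0:]
      = smult x (poly (\<psi> [:Gop \<alpha>1 h1 1:]) 0) - smult (x\<^sup>2 * \<alpha>1) (poly (\<psi> [:Fop \<alpha>1 h1 1:]) 0)"
    unfolding psi_dact_1 by (simp add: cscale_def)
  moreover have "poly (dact \<alpha>2 h2 x (\<psi> 1)) [:0:]
      = smult x (Gop \<alpha>2 h2 (poly (\<psi> 1) [:- x:])) - smult (x\<^sup>2 * \<alpha>2) (Fop \<alpha>2 h2 (poly (\<psi> 1) [:- x:]))"
    unfolding poly_dact_const by simp
  moreover have "\<psi> (dact \<alpha>1 h1 x 1) = dact \<alpha>2 h2 x (\<psi> 1)"
    using hom_dact_eq[OF assms(1), of m 1] m by simp
  ultimately show ?thesis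
    by metis
qed

text \<open>With \<open>\<lambda>\<^sub>1 = \<lambda>\<^sub>2\<close>, the previous identity at \<open>x = -k\<close> is a polynomial identity in \<open>k\<close>
  whose top coefficient is \<open>\<alpha>\<^sub>2 F\<close> of the leading coefficient of \<open>\<psi>(1)\<close>.\<close>

lemma degree_psi_1:
  assumes "l1 = l2"
  shows "degree (\<psi> 1) = 0"
proof (rule ccontr)
  assume nonconst: "degree (\<psi> 1) \<noteq> 0"
  let ?w = "\<psi> 1" and ?e1 = "poly (\<psi> [:Gop \<alpha>1 h1 1:]) 0" and ?e2 = "poly (\<psi> [:Fop \<alpha>1 h1 1:]) 0"
  define M1 where "M1 = map_poly (Gop \<alpha>2 h2) ?w"
  define M2 where "M2 = map_poly (\<lambda>f. smult \<alpha>2 (Fop \<alpha>2 h2 f)) ?w"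
  define R where "R = [:0, - ?e1, - smult \<alpha>1 ?e2:] + [:0, 1:] * M1 + [:0, 0, 1:] * M2"
  have M1: "poly M1 [:k:] = Gop \<alpha>2 h2 (poly ?w [:k:])" for k
    unfolding M1_def by (rule poly_map_poly_const) (simp_all add: additive_Gop Gop_smult)
  have M2: "poly M2 [:k:] = smult \<alpha>2 (Fop \<alpha>2 h2 (poly ?w [:k:]))" for k
    unfolding M2_def
    by (rule poly_map_poly_const)
      (auto simp: Fop_smult additive.add[OF additive_Fop] smult_add_right mult.commute
        intro!: additive.intro)
  have "R = 0"
  proof (rule poly_eq_0_if_roots_from[of 0])
    fix k :: nat
    show "poly R (of_nat k) = 0"
      using hom_dact_1_eval_0[OF assms Ints_minus[OF Ints_of_nat], of k]
      by (simp add: R_def M1 M2 of_nat_poly algebra_simps power2_eq_square smult_diff_right)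
  qed
  moreover have "coeff R (Suc (Suc (degree ?w))) = smult \<alpha>2 (Fop \<alpha>2 h2 (lead_coeff ?w))"
    using nonconst
    by (simp add: R_def M1_def M2_def coeff_map_poly coeff_eq_0 additive.zero[OF additive_Gop]
        additive.zero[OF additive_Fop])
  ultimately have "lead_coeff ?w = 0"
    using \<alpha>2 Fop_linear_eq_0_iff[OF \<xi>2] by simp
  then show False
    using nonconst by simp
qed

text \<open>Now \<open>\<psi>(1) = w\<^sub>0\<close> lies in \<open>\<complex>[t]\<close>; adding the constant terms of the actions of
  \<open>d\<^sub>1\<close> and \<open>d\<^sub>-\<^sub>1\<close> on \<open>1\<close> gives \<open>\<alpha>\<^sub>1\<xi>\<^sub>1 w\<^sub>0 = \<alpha>\<^sub>2 F(w\<^sub>0) = \<alpha>\<^sub>2 (\<xi>\<^sub>2 w\<^sub>0 - w\<^sub>0')\<close>.\<close>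

lemma psi_1_const:
  assumes "\<psi> 1 \<noteq> 0"
  shows "\<alpha>1 * \<xi>1 = \<alpha>2 * \<xi>2" and "\<exists>a. a \<noteq> 0 \<and> \<psi> 1 = [:[:a:]:]"
proof -
  have l: "l1 = l2" by (rule l1_eq_l2_if_psi_1_neq_0[OF assms])
  obtain w0 where w0: "\<psi> 1 = [:w0:]" using degree_psi_1[OF l] by (metis degree_0_id)
  have "w0 \<noteq> 0" using assms w0 by simp
  have F1: "\<psi> [:Fop \<alpha>1 h1 1:] = cscale \<xi>1 (\<psi> 1)"
    using psi_cscale[of \<xi>1 1] by (simp add: Fop_linear cscale_def one_pCons)
  let ?b = "poly (\<psi> [:Gop \<alpha>1 h1 1:]) 0" and ?G = "Gop \<alpha>2 h2 w0" and ?F = "Fop \<alpha>2 h2 w0"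
  have at_m: "smult x ?b - smult (x\<^sup>2 * \<alpha>1 * \<xi>1) w0 = smult x ?G - smult (x\<^sup>2 * \<alpha>2) ?F"
    if "x \<in> \<int>" for x
    using hom_dact_1_eval_0[OF l that] by (simp add: F1 w0 cscale_def mult_ac)
  have "(?b - smult (\<alpha>1 * \<xi>1) w0) + (- ?b - smult (\<alpha>1 * \<xi>1) w0)
      = (?G - smult \<alpha>2 ?F) + (- ?G - smult \<alpha>2 ?F)"
    using at_m[of 1] at_m[of "-1"] by simp
  then have "smult 2 (smult (\<alpha>1 * \<xi>1) w0) = smult 2 (smult \<alpha>2 ?F)"
    by (simp add: numeral_poly mult.commute)
  then have "smult (\<alpha>1 * \<xi>1) w0 = smult \<alpha>2 ?F"
    by (rule smult_cancel[rotated]) simp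
  then have eq: "smult (\<alpha>1 * \<xi>1) w0 = smult (\<alpha>2 * \<xi>2) w0 - smult \<alpha>2 (pderiv w0)"
    by (simp add: Fop_linear smult_diff_right)
  then have "coeff (smult (\<alpha>1 * \<xi>1) w0) (degree w0)
      = coeff (smult (\<alpha>2 * \<xi>2) w0 - smult \<alpha>2 (pderiv w0)) (degree w0)"
    by (simp only:)
  then have "\<alpha>1 * \<xi>1 * lead_coeff w0 = \<alpha>2 * \<xi>2 * lead_coeff w0"
    by (simp add: coeff_pderiv coeff_eq_0)
  then show compatible: "\<alpha>1 * \<xi>1 = \<alpha>2 * \<xi>2"
    using \<open>w0 \<noteq> 0\<close> by simp
  then have "degree w0 = 0"
    using eq \<alpha>2 by (simp flip: pderiv_eq_0_iff)
  then show "\<exists>a. a \<noteq> 0 \<and> \<psi> 1 = [:[:a:]:]"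
    using w0 \<open>w0 \<noteq> 0\<close> by (metis degree_0_id pCons_eq_0_iff)
qed

end

lemma (in affine_pair) omega_iso_imp_cscale_Phi:
  assumes iso: "omega_iso l1 \<alpha>1 [:\<eta>1, \<xi>1:] l2 \<alpha>2 [:\<eta>2, \<xi>2:] \<psi>"
    and "l1 \<noteq> 0" "l2 \<noteq> 0" "\<alpha>2 \<noteq> 0"
  shows "l1 = l2" "\<alpha>1 * \<xi>1 = \<alpha>2 * \<xi>2" "\<exists>c. c \<noteq> 0 \<and> (\<forall>P. \<psi> P = cscale c (Phi P))"
proof -
  interpret omega_hom \<eta>1 \<xi>1 \<eta>2 \<xi>2 l1 l2 \<alpha>1 \<alpha>2 \<psi>
    using iso assms(2-4) by unfold_locales (auto simp: omega_iso_def)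
  have "\<psi> 1 \<noteq> 0"
    using iso additive.zero[OF clinear_imp_additive[OF linear]]
    by (metis bij_is_inj injD omega_iso_def one_neq_zero)
  then show l: "l1 = l2" and compatible: "\<alpha>1 * \<xi>1 = \<alpha>2 * \<xi>2"
    by (rule l1_eq_l2_if_psi_1_neq_0, rule psi_1_const(1))
  obtain a where a: "a \<noteq> 0" "\<psi> 1 = [:[:a:]:]"
    using psi_1_const(2)[OF \<open>\<psi> 1 \<noteq> 0\<close>] by blast
  interpret difference: omega_hom \<eta>1 \<xi>1 \<eta>2 \<xi>2 l1 l2 \<alpha>1 \<alpha>2 "\<lambda>P. \<psi> P - cscale a (Phi P)"
  proof unfold_locales
    show "clinear (\<lambda>P. \<psi> P - cscale a (Phi P))"
      by (rule clinear_diff_cscale[OF linear clinear_Phi])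
    show "\<psi> (omega_act l1 \<alpha>1 [:\<eta>1, \<xi>1:] v P) - cscale a (Phi (omega_act l1 \<alpha>1 [:\<eta>1, \<xi>1:] v P))
        = omega_act l2 \<alpha>2 [:\<eta>2, \<xi>2:] v (\<psi> P - cscale a (Phi P))" for v P
      using hom[of v P] Phi_omega_act[OF compatible, of l1 v P] l
      by (simp add: additive.diff[OF additive_omega_act] omega_act_cscale)
  qed (use assms in simp_all)
  have "\<psi> 1 - cscale a (Phi 1) = 0"
    using a(2) by (simp add: Phi_1 cscale_def)
  then have "\<psi> P = cscale a (Phi P)" for P
    using difference.eq_0_if_psi_1_eq_0 by simp
  then show "\<exists>c. c \<noteq> 0 \<and> (\<forall>P. \<psi> P = cscale c (Phi P))"
    using a(1) by blast
qed

lemma (in affine_pair) omega_iso_iff_cscale_Phi: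
  assumes "l1 \<noteq> 0" "\<alpha>2 \<noteq> 0" "\<alpha>1 * \<xi>1 = \<alpha>2 * \<xi>2"
  shows "omega_iso l1 \<alpha>1 [:\<eta>1, \<xi>1:] l1 \<alpha>2 [:\<eta>2, \<xi>2:] \<psi>
    \<longleftrightarrow> (\<exists>c. c \<noteq> 0 \<and> (\<forall>P. \<psi> P = cscale c (Phi P)))"
proof
  show "\<exists>c. c \<noteq> 0 \<and> (\<forall>P. \<psi> P = cscale c (Phi P))"
    if "omega_iso l1 \<alpha>1 [:\<eta>1, \<xi>1:] l1 \<alpha>2 [:\<eta>2, \<xi>2:] \<psi>"
    using omega_iso_imp_cscale_Phi(3)[OF that assms(1,1,2)] .
next
  assume "\<exists>c. c \<noteq> 0 \<and> (\<forall>P. \<psi> P = cscale c (Phi P))"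
  then obtain c where "c \<noteq> 0" "\<psi> = (\<lambda>P. cscale c (Phi P))" by blast
  then show "omega_iso l1 \<alpha>1 [:\<eta>1, \<xi>1:] l1 \<alpha>2 [:\<eta>2, \<xi>2:] \<psi>"
    using omega_iso_cscale_Phi[OF assms(3)] by simp
qed

lemma (in affine_pair) clinear_eq_Phi:
  assumes "clinear \<phi>"
    and "\<And>n i. \<phi> (monom ([:\<eta>1, \<xi>1:] ^ n) i) = monom (gpoly (\<eta>2 - \<eta>1) n [:\<eta>2, \<xi>2:]) i"
  shows "\<phi> = Phi"
proof
  show "\<phi> P = Phi P" for P
    by (rule clinear_eqI_affine_power_monoms[OF assms(1) clinear_Phi \<xi>1, of \<eta>1])
      (simp only: assms(2) Phi_h1_power_monom)
qed

theorem corollary3p5: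
  fixes l1 l2 \<alpha>1 \<alpha>2 \<xi>1 \<xi>2 \<eta>1 \<eta>2 :: complex and h1 h2 :: "complex poly"
  assumes "l1 \<noteq> 0" "l2 \<noteq> 0" "\<alpha>1 \<noteq> 0" "\<alpha>2 \<noteq> 0" "\<xi>1 \<noteq> 0" "\<xi>2 \<noteq> 0"
    and "h1 = [:\<eta>1, \<xi>1:]" and "h2 = [:\<eta>2, \<xi>2:]"
  shows "(omega_isomorphic l1 \<alpha>1 h1 l2 \<alpha>2 h2 \<longleftrightarrow> l1 = l2 \<and> \<alpha>1 * \<xi>1 = \<alpha>2 * \<xi>2)
    \<and> (l1 = l2 \<and> \<alpha>1 * \<xi>1 = \<alpha>2 * \<xi>2 \<longrightarrow>
        (\<exists>\<phi>. clinear \<phi> \<and>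
           (\<forall>n i. \<phi> (monom (h1 ^ n) i) = monom (gpoly (\<eta>2 - \<eta>1) n h2) i))
      \<and> (\<forall>\<phi>. clinear \<phi> \<and>
           (\<forall>n i. \<phi> (monom (h1 ^ n) i) = monom (gpoly (\<eta>2 - \<eta>1) n h2) i) \<longrightarrow>
           (\<forall>\<psi>. omega_iso l1 \<alpha>1 h1 l2 \<alpha>2 h2 \<psi> \<longleftrightarrow>
                 (\<exists>c. c \<noteq> 0 \<and> (\<forall>P. \<psi> P = cscale c (\<phi> P))))))"
proof -
  interpret affine_pair \<eta>1 \<xi>1 \<eta>2 \<xi>2
    using assms by unfold_locales
  show ?thesis
    unfolding assms(7,8)
  proof (intro conjI impI allI)
    show "omega_isomorphic l1 \<alpha>1 [:\<eta>1, \<xi>1:] l2 \<alpha>2 [:\<eta>2, \<xi>2:] \<longleftrightarrow> l1 = l2 \<and> \<alpha>1 * \<xi>1 = \<alpha>2 * \<xi>2"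
      unfolding omega_isomorphic_def
      using omega_iso_imp_cscale_Phi(1,2)[OF _ assms(1,2,4)] omega_iso_cscale_Phi[of \<alpha>1 \<alpha>2 1 l1]
      by auto
    show "\<exists>\<phi>. clinear \<phi> \<and> (\<forall>n i. \<phi> (monom ([:\<eta>1, \<xi>1:] ^ n) i) = monom (gpoly (\<eta>2 - \<eta>1) n [:\<eta>2, \<xi>2:]) i)"
      using clinear_Phi Phi_h1_power_monom by blast
  next
    fix \<phi> \<psi>
    assume "l1 = l2 \<and> \<alpha>1 * \<xi>1 = \<alpha>2 * \<xi>2"
      and "clinear \<phi> \<and> (\<forall>n i. \<phi> (monom ([:\<eta>1, \<xi>1:] ^ n) i) = monom (gpoly (\<eta>2 - \<eta>1) n [:\<eta>2, \<xi>2:]) i)"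
    then show "omega_iso l1 \<alpha>1 [:\<eta>1, \<xi>1:] l2 \<alpha>2 [:\<eta>2, \<xi>2:] \<psi> \<longleftrightarrow> (\<exists>c. c \<noteq> 0 \<and> (\<forall>P. \<psi> P = cscale c (\<phi> P)))"
      using omega_iso_iff_cscale_Phi[OF assms(1,4)] clinear_eq_Phi by auto
  qed
qed

end
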